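(* For a ring $R$ with identity, the following are equivalent: (i) $R$ is left semi-hereditary (equivalently, $R\text{-Mod}$ is $1$-hereditary); (ii) for every matrix $A\in\mathbf{M}_{k\times m}(R)$ there exists a matrix $B\in\mathbf{M}_{t\times k}(R)$ (for some $t\ge1$) such that (a) for every $X\in\mathbf{M}_{1\times k}(R)$, $XA=0$ if and only if $X=YB$ for some $Y\in\mathbf{M}_{1\times t}(R)$, and (b) there exists $C\in\mathbf{M}_{k\times k}(R)$ with $BC=0$ and $CA=A$.
   Context: $R$ is left semi-hereditary if every finitely generated left ideal (equivalently, every finitely generated submodule of a finitely generated projective left module) is projective; equivalently every finitely presented left $R$-module has projective dimension $\le1$. *)

theory Defs
  imports "Jordan_Normal_Form.Matrix"
begin

text \<open>Rings with identity (not necessarily commutative) are rendered by the type class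
ring_1; the ring R is the whole type 'a.  Left modules are left modules over this ring.\<close>

definition left_ideal :: "'a::ring_1 set \<Rightarrow> bool" where
  "left_ideal I \<longleftrightarrow> 0 \<in> I \<and> (\<forall>x\<in>I. \<forall>y\<in>I. x + y \<in> I) \<and> (\<forall>r x. x \<in> I \<longrightarrow> r * x \<in> I)"

definition fg_left_ideal :: "'a::ring_1 set \<Rightarrow> bool" where
  "fg_left_ideal I \<longleftrightarrow> (\<exists>G. finite G \<and> I = {(\<Sum>g\<in>G. c g * g) | c. True})"

definition free_mod :: "'b set \<Rightarrow> ('b \<Rightarrow> 'a::ring_1) set" where
  "free_mod J = {f. finite {j. f j \<noteq> 0} \<and> (\<forall>j. j \<notin> J \<longrightarrow> f j = 0)}"

definition lin_into_free :: "'a::ring_1 set \<Rightarrow> 'b set \<Rightarrow> ('a \<Rightarrow> 'b \<Rightarrow> 'a) \<Rightarrow> bool" where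
  "lin_into_free I J s \<longleftrightarrow> (\<forall>x\<in>I. s x \<in> free_mod J) \<and>
     (\<forall>x\<in>I. \<forall>y\<in>I. s (x + y) = (\<lambda>j. s x j + s y j)) \<and>
     (\<forall>r. \<forall>x\<in>I. s (r * x) = (\<lambda>j. r * s x j))"

definition lin_from_free :: "'b set \<Rightarrow> 'a::ring_1 set \<Rightarrow> (('b \<Rightarrow> 'a) \<Rightarrow> 'a) \<Rightarrow> bool" where
  "lin_from_free J I p \<longleftrightarrow> (\<forall>f\<in>free_mod J. p f \<in> I) \<and>
     (\<forall>f\<in>free_mod J. \<forall>g\<in>free_mod J. p (\<lambda>j. f j + g j) = p f + p g) \<and>
     (\<forall>r. \<forall>f\<in>free_mod J. p (\<lambda>j. r * f j) = r * p f)"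

text \<open>A left ideal I is projective as a left R-module iff it is (isomorphic to) a direct
summand of a free left R-module, i.e. there are linear s : I \<rightarrow> R^(J), p : R^(J) \<rightarrow> I with
p \<circ> s = id.  Index sets J range over subsets of 'a, which suffices since I is a quotient
of R^(I).\<close>
definition projective_left_ideal :: "'a::ring_1 set \<Rightarrow> bool" where
  "projective_left_ideal I \<longleftrightarrow> (\<exists>(J::'a set) s p. lin_into_free I J s \<and> lin_from_free J I p \<and>
      (\<forall>x\<in>I. p (s x) = x))"

definition left_semi_hereditary :: "'a::ring_1 itself \<Rightarrow> bool" where
  "left_semi_hereditary _ \<longleftrightarrow>
     (\<forall>I::'a set. left_ideal I \<and> fg_left_ideal I \<longrightarrow> projective_left_ideal I)"

end

theory Submission
  imports Defs
begin

text \<open>By the dual basis lemma, the left ideal generated by the entries a_1, ..., a_k of a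
  column w is projective iff there is a k\<times>k matrix C with C w = w and X C = 0 whenever X w = 0.
  For (i) \<Longrightarrow> (ii), such matrices for the columns of A are combined one column at a time into a
  single C with C A = A that kills the left annihilator of A; that annihilator is then the row
  space of B = 1 - C, and B C = 0 because the rows of B annihilate A. For (ii) \<Longrightarrow> (i), applying
  (ii) to the column of generators of a finitely generated left ideal yields such a C.\<close>

definition left_span :: "(nat \<Rightarrow> 'a::ring_1) \<Rightarrow> nat \<Rightarrow> 'a set" where
  "left_span a k = {(\<Sum>i<k. x i * a i) | x. True}"

lemma left_ideal_left_span: "left_ideal (left_span a k)"
  unfolding left_ideal_def left_span_def
proof (intro conjI ballI allI impI)
  show "0 \<in> {(\<Sum>i<k. x i * a i) | x. True}" by (intro CollectI exI[of _ "\<lambda>i. 0"]) simp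
next
  fix u v assume "u \<in> {(\<Sum>i<k. x i * a i) | x. True}" "v \<in> {(\<Sum>i<k. x i * a i) | x. True}"
  then obtain x y where "u = (\<Sum>i<k. x i * a i)" "v = (\<Sum>i<k. y i * a i)" by auto
  then have "u + v = (\<Sum>i<k. (x i + y i) * a i)" by (simp add: sum.distrib distrib_right)
  then show "u + v \<in> {(\<Sum>i<k. x i * a i) | x. True}" by (intro CollectI exI[of _ "\<lambda>i. x i + y i"]) simp
next
  fix r u assume "u \<in> {(\<Sum>i<k. x i * a i) | x. True}"
  then obtain x where "u = (\<Sum>i<k. x i * a i)" by auto
  then have "r * u = (\<Sum>i<k. (r * x i) * a i)" by (simp add: sum_distrib_left mult.assoc)
  then show "r * u \<in> {(\<Sum>i<k. x i * a i) | x. True}" by (intro CollectI exI[of _ "\<lambda>i. r * x i"]) simp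
qed

lemma generator_in_left_span:
  assumes "i < k"
  shows "a i \<in> left_span a k"
proof -
  have "(\<Sum>l<k. (if l = i then 1 else 0) * a l) = a i"
    using assms by (simp add: if_distrib[of "\<lambda>r. r * _"] cong: if_cong)
  then show ?thesis unfolding left_span_def by (intro CollectI exI[of _ "\<lambda>l. if l = i then 1 else 0"]) simp
qed

lemma fg_left_ideal_left_span: "fg_left_ideal (left_span a k)"
  unfolding fg_left_ideal_def left_span_def
proof (intro exI[of _ "a ` {..<k}"] conjI)
  let ?G = "a ` {..<k}"
  show "finite ?G" by simp
  show "{(\<Sum>i<k. x i * a i) | x. True} = {(\<Sum>g\<in>?G. c g * g) | c. True}"
  proof (intro equalityI subsetI)
    fix z assume "z \<in> {(\<Sum>i<k. x i * a i) | x. True}"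
    then obtain x where z: "z = (\<Sum>i<k. x i * a i)" by auto
    define c where "c g = (\<Sum>i\<in>{i\<in>{..<k}. a i = g}. x i)" for g
    have "(\<Sum>i<k. x i * a i) = (\<Sum>g\<in>?G. \<Sum>i\<in>{i\<in>{..<k}. a i = g}. x i * a i)"
      by (rule sum.image_gen) simp
    also have "\<dots> = (\<Sum>g\<in>?G. c g * g)"
      unfolding c_def sum_distrib_right by (intro sum.cong refl) auto
    finally show "z \<in> {(\<Sum>g\<in>?G. c g * g) | c. True}" using z by auto
  next
    fix z assume "z \<in> {(\<Sum>g\<in>?G. c g * g) | c. True}"
    then obtain c where z: "z = (\<Sum>g\<in>?G. c g * g)" by auto
    define h where "h = inv_into {..<k} a"
    have h_bij: "bij_betw h ?G (h ` ?G)"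
      unfolding h_def by (rule inj_on_imp_bij_betw, rule inj_on_inv_into) simp
    have h_range: "h ` ?G \<subseteq> {..<k}"
      unfolding h_def by (auto intro!: inv_into_into[of _ _ "{..<k}", simplified])
    have a_h: "a (h g) = g" if "g \<in> ?G" for g
      unfolding h_def using that by (simp add: f_inv_into_f)
    define x where "x i = (if i \<in> h ` ?G then c (a i) else 0)" for i
    have "(\<Sum>i<k. x i * a i) = (\<Sum>i\<in>h ` ?G. x i * a i)"
      using h_range by (intro sum.mono_neutral_right) (auto simp: x_def)
    also have "\<dots> = (\<Sum>g\<in>?G. c g * g)"
      using sum.reindex_bij_betw[OF h_bij, of "\<lambda>i. x i * a i"] a_h by (simp add: x_def)
    finally show "z \<in> {(\<Sum>i<k. x i * a i) | x. True}"
      using z by (intro CollectI exI[of _ x]) simp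
  qed
qed

lemma fg_left_ideal_obtain_left_span:
  assumes "fg_left_ideal I"
  obtains k and a :: "nat \<Rightarrow> 'a::ring_1" where "inj_on a {..<k}" "I = left_span a k"
proof -
  from assms obtain G where G: "finite G" and I: "I = {(\<Sum>g\<in>G. c g * g) | c. True}"
    unfolding fg_left_ideal_def by blast
  obtain a where a: "bij_betw a {..<card G} G"
    using ex_bij_betw_nat_finite[OF G] by (auto simp: atLeast0LessThan)
  have reindex: "(\<Sum>g\<in>G. c g * g) = (\<Sum>i<card G. c (a i) * a i)" for c
    using sum.reindex_bij_betw[OF a, of "\<lambda>g. c g * g"] by simp
  have "I = left_span a (card G)"
    unfolding I left_span_def
  proof (intro equalityI subsetI)
    fix z assume "z \<in> {(\<Sum>g\<in>G. c g * g) | c. True}"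
    then obtain c where "z = (\<Sum>i<card G. c (a i) * a i)" unfolding reindex by blast
    then show "z \<in> {(\<Sum>i<card G. x i * a i) | x. True}"
      by (intro CollectI exI[of _ "\<lambda>i. c (a i)"]) simp
  next
    fix z assume "z \<in> {(\<Sum>i<card G. x i * a i) | x. True}"
    then obtain x where z: "z = (\<Sum>i<card G. x i * a i)" by blast
    have "(\<Sum>i<card G. x (inv_into {..<card G} a (a i)) * a i) = z"
      unfolding z using a by (intro sum.cong refl) (simp add: bij_betw_def)
    then show "z \<in> {(\<Sum>g\<in>G. c g * g) | c. True}"
      unfolding reindex by (intro CollectI exI[of _ "\<lambda>g. x (inv_into {..<card G} a g)"]) simp
  qed
  then show thesis using a that bij_betw_imp_inj_on by blast
qed

lemma free_mod_sum:
  assumes "finite F" "\<And>j. j \<in> F \<Longrightarrow> f j \<in> free_mod J"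
  shows "(\<lambda>t. \<Sum>j\<in>F. r j * f j t) \<in> free_mod J"
proof -
  have "{t. (\<Sum>j\<in>F. r j * f j t) \<noteq> 0} \<subseteq> (\<Union>j\<in>F. {t. f j t \<noteq> 0})"
    by (auto intro: ccontr simp: sum.neutral)
  moreover have "finite (\<Union>j\<in>F. {t. f j t \<noteq> 0})"
    using assms unfolding free_mod_def by auto
  ultimately show ?thesis
    using assms unfolding free_mod_def by (auto intro: finite_subset)
qed

lemma lin_from_free_add:
  "lin_from_free J I p \<Longrightarrow> f \<in> free_mod J \<Longrightarrow> g \<in> free_mod J \<Longrightarrow> p (\<lambda>j. f j + g j) = p f + p g"
  unfolding lin_from_free_def by blast

lemma lin_from_free_smult:
  "lin_from_free J I p \<Longrightarrow> f \<in> free_mod J \<Longrightarrow> p (\<lambda>j. r * f j) = r * p f"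
  unfolding lin_from_free_def by blast

lemma lin_from_free_sum:
  assumes p: "lin_from_free J I p" and F: "finite F" "\<And>j. j \<in> F \<Longrightarrow> f j \<in> free_mod J"
  shows "p (\<lambda>t. \<Sum>j\<in>F. r j * f j t) = (\<Sum>j\<in>F. r j * p (f j))"
  using F
proof (induction F rule: finite_induct)
  case empty
  have "(\<lambda>t. 0) \<in> free_mod J" unfolding free_mod_def by simp
  from lin_from_free_smult[OF p this, of 0] show ?case by simp
next
  case (insert j F)
  have "(\<lambda>t. r j * f j t) \<in> free_mod J" "(\<lambda>t. \<Sum>j\<in>F. r j * f j t) \<in> free_mod J"
    using insert free_mod_sum[of "{j}" f J r] free_mod_sum[of F f J r] by auto
  from lin_from_free_add[OF p this] show ?case
    using insert lin_from_free_smult[OF p, of "f j" "r j"] by simp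
qed

lemma left_ideal_sum:
  assumes "left_ideal I" "finite A" "\<And>i. i \<in> A \<Longrightarrow> b i \<in> I"
  shows "(\<Sum>i\<in>A. x i * b i) \<in> I"
  using assms(2,3)
  by (induction A rule: finite_induct) (use assms(1) in \<open>auto simp: left_ideal_def\<close>)

lemma lin_into_free_sum:
  assumes s: "lin_into_free I J s" and I: "left_ideal I"
    and A: "finite A" "\<And>i. i \<in> A \<Longrightarrow> b i \<in> I"
  shows "s (\<Sum>i\<in>A. x i * b i) = (\<lambda>j. \<Sum>i\<in>A. x i * s (b i) j)"
  using A
proof (induction A rule: finite_induct)
  case empty
  have "0 \<in> I" using I unfolding left_ideal_def by auto
  then have "s (0 * 0) = (\<lambda>j. 0 * s 0 j)" using s unfolding lin_into_free_def by blast
  then show ?case by simp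
next
  case (insert i A)
  have "x i * b i \<in> I" "(\<Sum>i\<in>A. x i * b i) \<in> I"
    using I insert left_ideal_sum[OF I insert(1), of b x] unfolding left_ideal_def by auto
  then have "s (x i * b i + (\<Sum>i\<in>A. x i * b i)) = (\<lambda>j. s (x i * b i) j + s (\<Sum>i\<in>A. x i * b i) j)"
    using s unfolding lin_into_free_def by blast
  moreover have "s (x i * b i) = (\<lambda>j. x i * s (b i) j)"
    using s insert unfolding lin_into_free_def by blast
  ultimately show ?case using insert by simp
qed

lemma lin_from_free_expand:
  assumes p: "lin_from_free J I p" and f: "f \<in> free_mod J"
    and F: "finite F" "F \<subseteq> J" "{j. f j \<noteq> 0} \<subseteq> F"
  shows "p f = (\<Sum>j\<in>F. f j * p (\<lambda>t. if t = j then 1 else 0))"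
proof -
  have "(\<lambda>t. \<Sum>j\<in>F. f j * (if t = j then 1 else 0)) = f"
    using F by (force simp: if_distrib[of "\<lambda>r. _ * r"] cong: if_cong)
  moreover have "(\<lambda>t. if t = j then 1 else 0) \<in> free_mod J" if "j \<in> J" for j
    using that unfolding free_mod_def by auto
  ultimately show ?thesis
    using lin_from_free_sum[OF p F(1), of "\<lambda>j t. if t = j then 1 else 0" f] F(2) by auto
qed

text \<open>The data of the dual basis lemma for the family a: c is the matrix of the coordinate
  functionals f_l (\<Sum>i<k. x i * a i) = \<Sum>i<k. x i * c i l, which are well defined by the second
  clause and satisfy y = \<Sum>l<k. f_l y * a l by the first.\<close>
definition dual_basis :: "(nat \<Rightarrow> 'a::ring_1) \<Rightarrow> nat \<Rightarrow> (nat \<Rightarrow> nat \<Rightarrow> 'a) \<Rightarrow> bool" where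
  "dual_basis a k c \<longleftrightarrow> (\<forall>i<k. (\<Sum>l<k. c i l * a l) = a i) \<and>
     (\<forall>x. (\<Sum>i<k. x i * a i) = 0 \<longrightarrow> (\<forall>l<k. (\<Sum>i<k. x i * c i l) = 0))"

lemma dual_basis_cong:
  assumes "\<And>i l. i < k \<Longrightarrow> l < k \<Longrightarrow> c i l = c' i l"
  shows "dual_basis a k c \<longleftrightarrow> dual_basis a k c'"
proof -
  have "(\<Sum>l<k. c i l * a l) = (\<Sum>l<k. c' i l * a l)" if "i < k" for i
    using assms that by (intro sum.cong) auto
  moreover have "(\<Sum>i<k. x i * c i l) = (\<Sum>i<k. x i * c' i l)" if "l < k" for x l
    using assms that by (intro sum.cong) auto
  ultimately show ?thesis unfolding dual_basis_def by auto
qed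

lemma projective_left_span_imp_dual_basis:
  assumes "projective_left_ideal (left_span a k)"
  obtains c where "dual_basis a k c"
proof -
  let ?I = "left_span a k"
  obtain J :: "'a set" and s p where s: "lin_into_free ?I J s" and p: "lin_from_free J ?I p"
    and ps: "\<And>x. x \<in> ?I \<Longrightarrow> p (s x) = x"
    using assms unfolding projective_left_ideal_def by blast
  define e where "e j = (\<lambda>t. if t = j then (1::'a) else 0)" for j :: 'a
  have e_free: "e j \<in> free_mod J" if "j \<in> J" for j
    using that unfolding free_mod_def e_def by auto
  have "\<exists>y. p (e j) = (\<Sum>l<k. y l * a l)" if "j \<in> J" for j
    using p e_free[OF that] unfolding lin_from_free_def left_span_def by blast
  then obtain y where y: "\<And>j. j \<in> J \<Longrightarrow> p (e j) = (\<Sum>l<k. y j l * a l)"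
    by metis
  have a_in: "a i \<in> ?I" if "i < k" for i
    using generator_in_left_span that .
  have s_a: "s (a i) \<in> free_mod J" if "i < k" for i
    using s a_in that unfolding lin_into_free_def by blast
  define F where "F = (\<Union>i<k. {j. s (a i) j \<noteq> 0})"
  have F: "finite F" "F \<subseteq> J"
    using s_a unfolding F_def free_mod_def by auto
  define c where "c i l = (\<Sum>j\<in>F. s (a i) j * y j l)" for i l
  have "(\<Sum>l<k. c i l * a l) = a i" if i: "i < k" for i
  proof -
    have "(\<Sum>l<k. c i l * a l) = (\<Sum>j\<in>F. s (a i) j * (\<Sum>l<k. y j l * a l))"
      unfolding c_def sum_distrib_right sum_distrib_left
      by (subst sum.swap) (simp add: mult.assoc)
    also have "\<dots> = (\<Sum>j\<in>F. s (a i) j * p (e j))"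
      using y F by (intro sum.cong refl) auto
    also have "\<dots> = p (s (a i))"
    proof (rule lin_from_free_expand[OF p s_a[OF i] F, unfolded e_def[symmetric], symmetric])
      show "{j. s (a i) j \<noteq> 0} \<subseteq> F" using i unfolding F_def by blast
    qed
    also have "\<dots> = a i" using ps a_in i by auto
    finally show ?thesis .
  qed
  moreover have "(\<Sum>i<k. x i * c i l) = 0" if x: "(\<Sum>i<k. x i * a i) = 0" for x l
  proof -
    have "(\<Sum>i<k. x i * c i l) = (\<Sum>j\<in>F. (\<Sum>i<k. x i * s (a i) j) * y j l)"
      unfolding c_def sum_distrib_right sum_distrib_left
      by (subst sum.swap) (simp add: mult.assoc)
    also have "\<dots> = (\<Sum>j\<in>F. s (\<Sum>i<k. x i * a i) j * y j l)"
      using lin_into_free_sum[OF s left_ideal_left_span, of "{..<k}" a x] a_in by simp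
    also have "\<dots> = 0"
      using x lin_into_free_sum[OF s left_ideal_left_span, of "{}" a] by simp
    finally show ?thesis .
  qed
  ultimately show thesis using that unfolding dual_basis_def by blast
qed

lemma dual_basis_coordinates:
  assumes c: "dual_basis a k c"
  shows "\<exists>f. \<forall>x l. l < k \<longrightarrow> f (\<Sum>i<k. x i * a i) l = (\<Sum>i<k. x i * c i l)"
proof -
  define rep where "rep y = (SOME x. y = (\<Sum>i<k. x i * a i))" for y
  have "f (\<Sum>i<k. x i * a i) l = (\<Sum>i<k. x i * c i l)"
    if f_def: "f = (\<lambda>y l. \<Sum>i<k. rep y i * c i l)" and l: "l < k" for f x l
  proof -
    let ?y = "\<Sum>i<k. x i * a i"
    have rep: "?y = (\<Sum>i<k. rep ?y i * a i)"
      unfolding rep_def by (rule someI[of "\<lambda>x'. ?y = (\<Sum>i<k. x' i * a i)" x]) (rule refl)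
    have "(\<Sum>i<k. (rep ?y i - x i) * a i) = (\<Sum>i<k. rep ?y i * a i) - ?y"
      by (simp add: left_diff_distrib sum_subtractf)
    also have "\<dots> = 0"
      by (simp add: rep[symmetric])
    finally have "(\<Sum>i<k. (rep ?y i - x i) * a i) = 0" .
    then have "(\<Sum>i<k. (rep ?y i - x i) * c i l) = 0"
      using c l unfolding dual_basis_def by simp
    then show ?thesis unfolding f_def by (simp add: left_diff_distrib sum_subtractf)
  qed
  then show ?thesis by blast
qed

lemma lin_from_free_left_span:
  assumes inj: "inj_on a {..<k}"
  shows "lin_from_free (a ` {..<k}) (left_span a k) (\<lambda>f. \<Sum>g\<in>a ` {..<k}. f g * g)"
  unfolding lin_from_free_def
proof (intro conjI ballI allI)
  fix f :: "'a \<Rightarrow> 'a"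
  have "(\<Sum>g\<in>a ` {..<k}. f g * g) = (\<Sum>i<k. f (a i) * a i)"
    using sum.reindex[OF inj, of "\<lambda>g. f g * g"] by simp
  then show "(\<Sum>g\<in>a ` {..<k}. f g * g) \<in> left_span a k"
    unfolding left_span_def by (intro CollectI exI[of _ "\<lambda>i. f (a i)"]) simp
qed (simp_all add: distrib_right sum.distrib sum_distrib_left mult.assoc)

lemma lin_into_free_left_span:
  assumes coords: "\<And>x l. l < k \<Longrightarrow> f (\<Sum>i<k. x i * a i) l = (\<Sum>i<k. x i * c i l)"
  shows "lin_into_free (left_span a k) (a ` {..<k})
    (\<lambda>y g. if g \<in> a ` {..<k} then f y (inv_into {..<k} a g) else 0)"
  (is "lin_into_free ?I ?J ?s")
  unfolding lin_into_free_def
proof (intro conjI ballI allI)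
  have h_range: "inv_into {..<k} a g < k" if "g \<in> ?J" for g
    using that by (auto intro: inv_into_into[of _ _ "{..<k}", simplified])
  {
    fix y show "?s y \<in> free_mod ?J"
      unfolding free_mod_def by (auto intro: finite_subset[of _ ?J])
  next
    fix y z assume "y \<in> ?I" "z \<in> ?I"
    then obtain x x' where y: "y = (\<Sum>i<k. x i * a i)" and z: "z = (\<Sum>i<k. x' i * a i)"
      unfolding left_span_def by blast
    have sum_yz: "y + z = (\<Sum>i<k. (x i + x' i) * a i)"
      unfolding y z by (simp add: distrib_right sum.distrib)
    have "f (y + z) l = f y l + f z l" if "l < k" for l
      unfolding sum_yz coords[OF that] unfolding y z coords[OF that]
      by (simp add: distrib_right sum.distrib)
    then show "?s (y + z) = (\<lambda>j. ?s y j + ?s z j)"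
      using h_range by auto
  next
    fix r y assume "y \<in> ?I"
    then obtain x where y: "y = (\<Sum>i<k. x i * a i)"
      unfolding left_span_def by blast
    have sum_ry: "r * y = (\<Sum>i<k. (r * x i) * a i)"
      unfolding y by (simp add: sum_distrib_left mult.assoc)
    have "f (r * y) l = r * f y l" if "l < k" for l
      unfolding sum_ry coords[OF that] unfolding y coords[OF that]
      by (simp add: sum_distrib_left mult.assoc)
    then show "?s (r * y) = (\<lambda>j. r * ?s y j)"
      using h_range by auto
  }
qed

lemma dual_basis_imp_projective_left_span:
  assumes inj: "inj_on a {..<k}" and c: "dual_basis a k c"
  shows "projective_left_ideal (left_span a k)"
proof -
  let ?J = "a ` {..<k}"
  obtain f where coords: "\<And>x l. l < k \<Longrightarrow> f (\<Sum>i<k. x i * a i) l = (\<Sum>i<k. x i * c i l)"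
    using dual_basis_coordinates[OF c] by blast
  define s where "s y = (\<lambda>g. if g \<in> ?J then f y (inv_into {..<k} a g) else 0)" for y
  define p where "p v = (\<Sum>g\<in>?J. v g * g)" for v :: "'a \<Rightarrow> 'a"
  have "p (s y) = y" if y_in: "y \<in> left_span a k" for y
  proof -
    obtain x where y: "y = (\<Sum>i<k. x i * a i)"
      using y_in unfolding left_span_def by blast
    have "p (s y) = (\<Sum>l<k. f y l * a l)"
      using sum.reindex[OF inj, of "\<lambda>g. s y g * g"] inj unfolding p_def s_def by simp
    also have "\<dots> = (\<Sum>l<k. (\<Sum>i<k. x i * c i l) * a l)"
      unfolding y by (intro sum.cong refl) (simp add: coords)
    also have "\<dots> = (\<Sum>i<k. x i * (\<Sum>l<k. c i l * a l))"
      unfolding sum_distrib_right sum_distrib_left by (subst sum.swap) (simp add: mult.assoc)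
    also have "\<dots> = y"
      using c unfolding y dual_basis_def by simp
    finally show ?thesis .
  qed
  moreover have "lin_into_free (left_span a k) ?J s"
    unfolding s_def[abs_def] by (rule lin_into_free_left_span[where f = f and c = c, OF coords])
  moreover have "lin_from_free ?J (left_span a k) p"
    unfolding p_def[abs_def] by (rule lin_from_free_left_span[OF inj])
  ultimately show ?thesis
    unfolding projective_left_ideal_def by blast
qed

definition col_mat :: "'a mat \<Rightarrow> nat \<Rightarrow> 'a mat" where
  "col_mat A j = mat (dim_row A) 1 (\<lambda>(i, _). A $$ (i, j))"

definition row_mat :: "'a mat \<Rightarrow> nat \<Rightarrow> 'a mat" where
  "row_mat A i = mat 1 (dim_col A) (\<lambda>(_, j). A $$ (i, j))"

lemma row_mat_carrier: "A \<in> carrier_mat k m \<Longrightarrow> row_mat A i \<in> carrier_mat 1 m"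
  unfolding row_mat_def by simp

lemma col_mat_mult:
  fixes M :: "'a::semiring_0 mat"
  assumes "M \<in> carrier_mat r k" "A \<in> carrier_mat k m" "j < m"
  shows "col_mat (M * A) j = M * col_mat A j"
  using assms unfolding col_mat_def by (intro eq_matI) (auto simp: scalar_prod_def)

lemma row_mat_mult:
  fixes M :: "'a::semiring_0 mat"
  assumes "M \<in> carrier_mat r k" "A \<in> carrier_mat k m" "i < r"
  shows "row_mat (M * A) i = row_mat M i * A"
  using assms unfolding row_mat_def by (intro eq_matI) (auto simp: scalar_prod_def)

lemma mat_eq_iff_col_mat:
  assumes "A \<in> carrier_mat k m" "B \<in> carrier_mat k m"
  shows "A = B \<longleftrightarrow> (\<forall>j<m. col_mat A j = col_mat B j)"
proof
  assume cols: "\<forall>j<m. col_mat A j = col_mat B j"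
  show "A = B"
  proof (rule eq_matI)
    fix i j assume "i < dim_row B" "j < dim_col B"
    with assms cols have "col_mat A j $$ (i, 0) = col_mat B j $$ (i, 0)" by auto
    with assms \<open>i < dim_row B\<close> show "A $$ (i, j) = B $$ (i, j)" unfolding col_mat_def by simp
  qed (use assms in auto)
qed simp

lemma mat_eq_iff_row_mat:
  assumes "A \<in> carrier_mat k m" "B \<in> carrier_mat k m"
  shows "A = B \<longleftrightarrow> (\<forall>i<k. row_mat A i = row_mat B i)"
proof
  assume rows: "\<forall>i<k. row_mat A i = row_mat B i"
  show "A = B"
  proof (rule eq_matI)
    fix i j assume "i < dim_row B" "j < dim_col B"
    with assms rows have "row_mat A i $$ (0, j) = row_mat B i $$ (0, j)" by auto
    with assms \<open>j < dim_col B\<close> show "A $$ (i, j) = B $$ (i, j)" unfolding row_mat_def by simp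
  qed (use assms in auto)
qed simp

lemma col_mat_zero [simp]: "j < m \<Longrightarrow> col_mat (0\<^sub>m k m) j = 0\<^sub>m k 1"
  unfolding col_mat_def by (rule eq_matI) auto

lemma row_mat_zero [simp]: "i < k \<Longrightarrow> row_mat (0\<^sub>m k m) i = 0\<^sub>m 1 m"
  unfolding row_mat_def by (rule eq_matI) auto

definition splitting_mat :: "nat \<Rightarrow> 'a::ring_1 mat set \<Rightarrow> 'a mat \<Rightarrow> bool" where
  "splitting_mat k W C \<longleftrightarrow> C \<in> carrier_mat k k \<and> (\<forall>w\<in>W. C * w = w) \<and>
     (\<forall>X\<in>carrier_mat 1 k. (\<forall>w\<in>W. X * w = 0\<^sub>m 1 1) \<longrightarrow> X * C = 0\<^sub>m 1 k)"

lemma splitting_mat_empty: "splitting_mat k {} (0\<^sub>m k k)"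
  unfolding splitting_mat_def by auto

text \<open>Once C splits W, only the residue (1 - C) w of the new column is left to split, and
  D (1 - C) corrects C on it without disturbing W.\<close>
lemma splitting_mat_insert:
  fixes C D :: "'a::ring_1 mat"
  assumes w: "w \<in> carrier_mat k 1" and W: "W \<subseteq> carrier_mat k 1"
    and C: "splitting_mat k W C" and D: "splitting_mat k {(1\<^sub>m k - C) * w} D"
  shows "splitting_mat k (insert w W) (C + D * (1\<^sub>m k - C))"
proof -
  let ?P = "1\<^sub>m k - C"
  have Cc: "C \<in> carrier_mat k k" and Dc: "D \<in> carrier_mat k k" and Pc: "?P \<in> carrier_mat k k"
    using C D unfolding splitting_mat_def by auto
  have P_col: "?P * u = u - C * u" if "u \<in> carrier_mat k 1" for u
    using that Cc by (subst minus_mult_distrib_mat) auto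
  have P_row: "X * ?P = X - X * C" if "X \<in> carrier_mat 1 k" for X
    using that Cc by (subst mult_minus_distrib_mat) auto
  have mult_col: "(C + D * ?P) * u = C * u + D * (?P * u)" if "u \<in> carrier_mat k 1" for u
    using that Cc Dc Pc by (simp add: add_mult_distrib_mat[of _ k k] assoc_mult_mat[of _ k k])
  have "(C + D * ?P) * u = u" if "u \<in> W" for u
  proof -
    have u: "u \<in> carrier_mat k 1" using that W by auto
    then have "?P * u = 0\<^sub>m k 1"
      using C that P_col unfolding splitting_mat_def by auto
    then show ?thesis using mult_col[OF u] C that u Dc unfolding splitting_mat_def by auto
  qed
  moreover have "(C + D * ?P) * w = w"
  proof -
    have "D * (?P * w) = ?P * w" using D unfolding splitting_mat_def by auto
    then show ?thesis using mult_col[OF w] P_col[OF w] w Cc by auto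
  qed
  moreover have "X * (C + D * ?P) = 0\<^sub>m 1 k"
    if X: "X \<in> carrier_mat 1 k" and Xw: "\<forall>u\<in>insert w W. X * u = 0\<^sub>m 1 1" for X
  proof -
    have XC: "X * C = 0\<^sub>m 1 k" using C X Xw unfolding splitting_mat_def by auto
    have "X * (?P * w) = (X * ?P) * w" using X Pc w by simp
    also have "X * ?P = X" using P_row[OF X] XC X by auto
    finally have "X * D = 0\<^sub>m 1 k" using D X Xw unfolding splitting_mat_def by auto
    then show ?thesis
      using X Cc Dc Pc XC
      by (simp add: mult_add_distrib_mat[of _ 1 k] assoc_mult_mat[symmetric, of _ 1 k])
  qed
  ultimately show ?thesis
    unfolding splitting_mat_def using Cc Dc Pc by auto
qed

lemma splitting_mat_column_iff_dual_basis:
  fixes a :: "nat \<Rightarrow> 'a::ring_1"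
  shows "splitting_mat k {mat k 1 (\<lambda>(i, _). a i)} C \<longleftrightarrow>
    C \<in> carrier_mat k k \<and> dual_basis a k (\<lambda>i l. C $$ (i, l))"
proof (cases "C \<in> carrier_mat k k")
  case True
  let ?w = "mat k 1 (\<lambda>(i, _). a i)"
  have reproduce: "C * ?w = ?w \<longleftrightarrow> (\<forall>i<k. (\<Sum>l<k. C $$ (i, l) * a l) = a i)"
    using True by (auto simp: mat_eq_iff scalar_prod_def atLeast0LessThan)
  have kills_w: "X * ?w = 0\<^sub>m 1 1 \<longleftrightarrow> (\<Sum>i<k. X $$ (0, i) * a i) = 0"
    if "X \<in> carrier_mat 1 k" for X
    using that by (auto simp: mat_eq_iff scalar_prod_def atLeast0LessThan)
  have kills_C: "X * C = 0\<^sub>m 1 k \<longleftrightarrow> (\<forall>l<k. (\<Sum>i<k. X $$ (0, i) * C $$ (i, l)) = 0)"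
    if "X \<in> carrier_mat 1 k" for X
    using that True by (auto simp: mat_eq_iff scalar_prod_def atLeast0LessThan)
  have "(\<forall>X\<in>carrier_mat 1 k. X * ?w = 0\<^sub>m 1 1 \<longrightarrow> X * C = 0\<^sub>m 1 k) \<longleftrightarrow>
        (\<forall>x. (\<Sum>i<k. x i * a i) = 0 \<longrightarrow> (\<forall>l<k. (\<Sum>i<k. x i * C $$ (i, l)) = 0))"
  proof
    assume H: "\<forall>X\<in>carrier_mat 1 k. X * ?w = 0\<^sub>m 1 1 \<longrightarrow> X * C = 0\<^sub>m 1 k"
    show "\<forall>x. (\<Sum>i<k. x i * a i) = 0 \<longrightarrow> (\<forall>l<k. (\<Sum>i<k. x i * C $$ (i, l)) = 0)"
    proof (intro allI impI)
      fix x l assume x: "(\<Sum>i<k. x i * a i) = 0" and l: "l < k"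
      define X where "X = mat 1 k (\<lambda>(_, i). x i)"
      have X: "X \<in> carrier_mat 1 k" unfolding X_def by simp
      have X_sum: "(\<Sum>i<k. X $$ (0, i) * f i) = (\<Sum>i<k. x i * f i)" for f
        unfolding X_def by (rule sum.cong) simp_all
      have "X * C = 0\<^sub>m 1 k"
        using H X kills_w[OF X] x unfolding X_sum by blast
      then show "(\<Sum>i<k. x i * C $$ (i, l)) = 0"
        using kills_C[OF X] l unfolding X_sum by blast
    qed
  next
    assume H: "\<forall>x. (\<Sum>i<k. x i * a i) = 0 \<longrightarrow> (\<forall>l<k. (\<Sum>i<k. x i * C $$ (i, l)) = 0)"
    show "\<forall>X\<in>carrier_mat 1 k. X * ?w = 0\<^sub>m 1 1 \<longrightarrow> X * C = 0\<^sub>m 1 k"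
    proof (intro ballI impI)
      fix X :: "'a mat" assume X: "X \<in> carrier_mat 1 k" and "X * ?w = 0\<^sub>m 1 1"
      then have "(\<Sum>i<k. X $$ (0, i) * a i) = 0" using kills_w by blast
      with H[rule_format, of "\<lambda>i. X $$ (0, i)"] show "X * C = 0\<^sub>m 1 k"
        using kills_C[OF X] by blast
    qed
  qed
  with True reproduce show ?thesis
    unfolding splitting_mat_def dual_basis_def by auto
qed (simp add: splitting_mat_def)

lemma left_semi_hereditary_splitting_mat:
  assumes lsh: "left_semi_hereditary TYPE('a::ring_1)"
    and "finite W" "W \<subseteq> carrier_mat k 1"
  shows "\<exists>C :: 'a mat. splitting_mat k W C"
  using assms(2,3)
proof (induction W rule: finite_induct)
  case empty
  show ?case using splitting_mat_empty by blast
next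
  case (insert w W)
  then obtain C where C: "splitting_mat k W C" by auto
  define a where "a i = ((1\<^sub>m k - C) * w) $$ (i, 0)" for i
  have "(1\<^sub>m k - C) * w \<in> carrier_mat k 1"
    using C insert.prems unfolding splitting_mat_def by auto
  then have w': "(1\<^sub>m k - C) * w = mat k 1 (\<lambda>(i, _). a i)"
    unfolding a_def by (intro eq_matI) auto
  have "projective_left_ideal (left_span a k)"
    using lsh left_ideal_left_span fg_left_ideal_left_span unfolding left_semi_hereditary_def by blast
  then obtain c where "dual_basis a k c"
    by (rule projective_left_span_imp_dual_basis)
  then have "dual_basis a k (\<lambda>i l. mat k k (\<lambda>(i, l). c i l) $$ (i, l))"
    by (subst dual_basis_cong[where c' = c]) auto
  then have "splitting_mat k {(1\<^sub>m k - C) * w} (mat k k (\<lambda>(i, l). c i l))"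
    unfolding w' splitting_mat_column_iff_dual_basis by simp
  then show ?case
    using splitting_mat_insert[OF _ _ C] insert.prems by blast
qed

lemma splitting_mat_col_mat_iff:
  fixes A :: "'a::ring_1 mat"
  assumes A: "A \<in> carrier_mat k m"
  shows "splitting_mat k (col_mat A ` {..<m}) C \<longleftrightarrow>
    C \<in> carrier_mat k k \<and> C * A = A \<and> (\<forall>X\<in>carrier_mat 1 k. X * A = 0\<^sub>m 1 m \<longrightarrow> X * C = 0\<^sub>m 1 k)"
proof -
  have fixes_A: "C * A = A \<longleftrightarrow> (\<forall>j<m. C * col_mat A j = col_mat A j)"
    if "C \<in> carrier_mat k k"
    using that A mat_eq_iff_col_mat[of "C * A" k m A] col_mat_mult[OF that A] by auto
  have kills_A: "X * A = 0\<^sub>m 1 m \<longleftrightarrow> (\<forall>j<m. X * col_mat A j = 0\<^sub>m 1 1)"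
    if "X \<in> carrier_mat 1 k" for X
    using that A mat_eq_iff_col_mat[of "X * A" 1 m "0\<^sub>m 1 m"] col_mat_mult[OF that A] by auto
  show ?thesis
    unfolding splitting_mat_def using fixes_A kills_A by auto
qed

definition split_left_annihilator :: "nat \<Rightarrow> nat \<Rightarrow> 'a::ring_1 mat \<Rightarrow> bool" where
  "split_left_annihilator k m A \<longleftrightarrow> (\<exists>t B. t \<ge> 1 \<and> B \<in> carrier_mat t k \<and>
     (\<forall>X \<in> carrier_mat 1 k. X * A = 0\<^sub>m 1 m \<longleftrightarrow> (\<exists>Y \<in> carrier_mat 1 t. X = Y * B)) \<and>
     (\<exists>C \<in> carrier_mat k k. B * C = 0\<^sub>m t k \<and> C * A = A))"

text \<open>For a splitting matrix C, the left annihilator of A is the row space of B = 1 - C.\<close>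
lemma split_left_annihilator_iff_splitting_mat:
  fixes A :: "'a::ring_1 mat"
  assumes k: "k \<ge> 1" and A: "A \<in> carrier_mat k m"
  shows "split_left_annihilator k m A \<longleftrightarrow> (\<exists>C. splitting_mat k (col_mat A ` {..<m}) C)"
proof
  assume "split_left_annihilator k m A"
  then obtain t B C where B: "B \<in> carrier_mat t k"
    and ann: "\<forall>X \<in> carrier_mat 1 k. X * A = 0\<^sub>m 1 m \<longleftrightarrow> (\<exists>Y \<in> carrier_mat 1 t. X = Y * B)"
    and C: "C \<in> carrier_mat k k" "B * C = 0\<^sub>m t k" "C * A = A"
    unfolding split_left_annihilator_def by blast
  have "X * C = 0\<^sub>m 1 k" if X: "X \<in> carrier_mat 1 k" "X * A = 0\<^sub>m 1 m" for X
  proof -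
    obtain Y where Y: "Y \<in> carrier_mat 1 t" "X = Y * B" using ann X by blast
    then have "X * C = Y * (B * C)" using B C by simp
    then show ?thesis using C Y by simp
  qed
  then show "\<exists>C. splitting_mat k (col_mat A ` {..<m}) C"
    using C splitting_mat_col_mat_iff[OF A] by blast
next
  assume "\<exists>C. splitting_mat k (col_mat A ` {..<m}) C"
  then obtain C where C: "C \<in> carrier_mat k k" "C * A = A"
    and split: "\<And>X. X \<in> carrier_mat 1 k \<Longrightarrow> X * A = 0\<^sub>m 1 m \<Longrightarrow> X * C = 0\<^sub>m 1 k"
    using splitting_mat_col_mat_iff[OF A] by blast
  define B where "B = 1\<^sub>m k - C"
  have Bc: "B \<in> carrier_mat k k" unfolding B_def using C by auto
  have XB: "X * B = X - X * C" if "X \<in> carrier_mat 1 k" for X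
    unfolding B_def using that C by (subst mult_minus_distrib_mat) auto
  have BA: "B * A = 0\<^sub>m k m"
    unfolding B_def using A C by (subst minus_mult_distrib_mat) auto
  have ann: "X * A = 0\<^sub>m 1 m \<longleftrightarrow> (\<exists>Y \<in> carrier_mat 1 k. X = Y * B)" if X: "X \<in> carrier_mat 1 k" for X
  proof
    assume "X * A = 0\<^sub>m 1 m"
    then have "X = X * B" using XB[OF X] split[OF X] X by auto
    then show "\<exists>Y \<in> carrier_mat 1 k. X = Y * B" using X by blast
  next
    assume "\<exists>Y \<in> carrier_mat 1 k. X = Y * B"
    then obtain Y where "Y \<in> carrier_mat 1 k" "X = Y * B" by blast
    then show "X * A = 0\<^sub>m 1 m" using Bc A BA by simp
  qed
  have "B * C = 0\<^sub>m k k"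
  proof -
    have "row_mat B i * C = 0\<^sub>m 1 k" if i: "i < k" for i
    proof (rule split)
      show "row_mat B i \<in> carrier_mat 1 k" using Bc by (rule row_mat_carrier)
      show "row_mat B i * A = 0\<^sub>m 1 m" using row_mat_mult[OF Bc A i] BA i by simp
    qed
    then show ?thesis
      using mat_eq_iff_row_mat[of "B * C" k k "0\<^sub>m k k"] row_mat_mult[OF Bc C(1)] Bc C by simp
  qed
  then show "split_left_annihilator k m A"
    unfolding split_left_annihilator_def using k Bc ann C by blast
qed

lemma split_left_annihilator_column_imp_dual_basis:
  fixes a :: "nat \<Rightarrow> 'a::ring_1"
  assumes "k \<ge> 1" and "split_left_annihilator k 1 (mat k 1 (\<lambda>(i, _). a i))"
  shows "\<exists>c. dual_basis a k c"
proof -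
  let ?A = "mat k 1 (\<lambda>(i, _). a i)"
  have "col_mat ?A 0 = ?A"
    by (auto simp: col_mat_def)
  then have "col_mat ?A ` {..<1} = {?A}"
    by (simp add: lessThan_Suc)
  then obtain C where "splitting_mat k {?A} C"
    using assms split_left_annihilator_iff_splitting_mat[of k ?A 1] by auto
  then show ?thesis
    unfolding splitting_mat_column_iff_dual_basis by blast
qed

theorem corollary5p6:
  shows "left_semi_hereditary TYPE('a::ring_1) \<longleftrightarrow>
    (\<forall>k m (A::'a mat). k \<ge> 1 \<and> m \<ge> 1 \<and> A \<in> carrier_mat k m \<longrightarrow>
      (\<exists>t (B::'a mat). t \<ge> 1 \<and> B \<in> carrier_mat t k \<and>
         (\<forall>X \<in> carrier_mat 1 k. X * A = 0\<^sub>m 1 m \<longleftrightarrow> (\<exists>Y \<in> carrier_mat 1 t. X = Y * B)) \<and>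
         (\<exists>C \<in> carrier_mat k k. B * C = 0\<^sub>m t k \<and> C * A = A)))"
  unfolding split_left_annihilator_def[symmetric]
proof (intro iffI allI impI)
  fix k m and A :: "'a mat"
  assume "left_semi_hereditary TYPE('a)" and kmA: "k \<ge> 1 \<and> m \<ge> 1 \<and> A \<in> carrier_mat k m"
  then have "\<exists>C. splitting_mat k (col_mat A ` {..<m}) C"
    by (intro left_semi_hereditary_splitting_mat) (auto simp: col_mat_def)
  then show "split_left_annihilator k m A"
    using split_left_annihilator_iff_splitting_mat kmA by blast
next
  assume H: "\<forall>k m (A::'a mat). k \<ge> 1 \<and> m \<ge> 1 \<and> A \<in> carrier_mat k m \<longrightarrow> split_left_annihilator k m A"
  show "left_semi_hereditary TYPE('a)"
    unfolding left_semi_hereditary_def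
  proof (intro allI impI)
    fix I :: "'a set" assume "left_ideal I \<and> fg_left_ideal I"
    then obtain k a where a: "inj_on a {..<k}" and I: "I = left_span a k"
      using fg_left_ideal_obtain_left_span by blast
    have "\<exists>c. dual_basis a k c"
      using H split_left_annihilator_column_imp_dual_basis[of k a]
      by (cases "k = 0") (auto simp: dual_basis_def)
    then show "projective_left_ideal I"
      unfolding I using dual_basis_imp_projective_left_span[OF a] by blast
  qed
qed

end
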